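(* The function $\Phi(M^1,\dots,M^n)=\sum_{p\in N}2|M^p|+|M^I(M^1,\dots,M^n)|$ is in general not a potential function for the #-KEG with more than two players: there exist a 3-player #-KEG instance, a deterministic maximum-cardinality IA algorithm $\mathcal{A}$, and a sequence of unilateral deviations of one player, each strictly increasing that player's utility, along which $\Phi$ does not strictly increase at every step.
   Context: The #-KEG: players $N=\{1,\dots,n\}$; player $p$ has internal graph $G^p=(V^p,E^p)$ (pairwise disjoint vertex sets); $E^I$ is a set of external edges each joining vertices of two different players; $G=(V,E)$ with $V=\bigcup_pV^p$, $E=E^I\cup\bigcup_pE^p$. A strategy of player $p$ is a matching $M^p$ of $G^p$; the IA selects, via a deterministic algorithm $\mathcal{A}$, a maximum-cardinality matching $M^I(M^1,\dots,M^n)$ of the external edges whose endpoints are uncovered by $\bigcup_pM^p$. Player $p$'s utility is $2|M^p|+|M^I_p|$, where $M^I_p$ is the set of edges of $M^I$ incident to $V^p$. A function $\Phi$ on strategy profiles is a potential function if its value strictly increases whenever a player unilaterally switches to a strategy that strictly increases her utility. *)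

theory Defs
  imports Main
begin

text \<open>V p is the vertex set of player p, E p the edge set of the internal graph G^p,
  EI the set of external edges.\<close>

definition players :: "nat \<Rightarrow> nat set" where
  "players n = {1..n}"

definition is_matching :: "nat set set \<Rightarrow> bool" where
  "is_matching M \<longleftrightarrow> (\<forall>e\<in>M. \<forall>e'\<in>M. e \<noteq> e' \<longrightarrow> e \<inter> e' = {})"

definition keg :: "nat \<Rightarrow> (nat \<Rightarrow> nat set) \<Rightarrow> (nat \<Rightarrow> nat set set) \<Rightarrow> nat set set \<Rightarrow> bool" where
  "keg n V E EI \<longleftrightarrow>
     (\<forall>p\<in>players n. finite (V p)) \<and>
     (\<forall>p\<in>players n. \<forall>q\<in>players n. p \<noteq> q \<longrightarrow> V p \<inter> V q = {}) \<and>
     (\<forall>p\<in>players n. \<forall>e\<in>E p. card e = 2 \<and> e \<subseteq> V p) \<and>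
     (\<forall>e\<in>EI. card e = 2 \<and>
        (\<exists>p\<in>players n. \<exists>q\<in>players n. p \<noteq> q \<and> e \<inter> V p \<noteq> {} \<and> e \<inter> V q \<noteq> {} \<and>
            e \<subseteq> V p \<union> V q))"

definition profile :: "nat \<Rightarrow> (nat \<Rightarrow> nat set set) \<Rightarrow> (nat \<Rightarrow> nat set set) \<Rightarrow> bool" where
  "profile n E M \<longleftrightarrow> (\<forall>p\<in>players n. M p \<subseteq> E p \<and> is_matching (M p)) \<and>
                      (\<forall>p. p \<notin> players n \<longrightarrow> M p = {})"

definition covered :: "nat \<Rightarrow> (nat \<Rightarrow> nat set set) \<Rightarrow> nat set" where
  "covered n M = (\<Union>p\<in>players n. \<Union>(M p))"

definition available_ext :: "nat \<Rightarrow> nat set set \<Rightarrow> (nat \<Rightarrow> nat set set) \<Rightarrow> nat set set" where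
  "available_ext n EI M = {e\<in>EI. e \<inter> covered n M = {}}"

definition max_card_matching :: "nat set set \<Rightarrow> nat set set \<Rightarrow> bool" where
  "max_card_matching F M \<longleftrightarrow> M \<subseteq> F \<and> is_matching M \<and>
     (\<forall>M'. M' \<subseteq> F \<and> is_matching M' \<longrightarrow> card M' \<le> card M)"

definition ia_algorithm :: "nat \<Rightarrow> (nat \<Rightarrow> nat set set) \<Rightarrow> nat set set
      \<Rightarrow> ((nat \<Rightarrow> nat set set) \<Rightarrow> nat set set) \<Rightarrow> bool" where
  "ia_algorithm n E EI A \<longleftrightarrow>
     (\<forall>M. profile n E M \<longrightarrow> max_card_matching (available_ext n EI M) (A M))"

definition utility :: "((nat \<Rightarrow> nat set set) \<Rightarrow> nat set set) \<Rightarrow> (nat \<Rightarrow> nat set)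
      \<Rightarrow> nat \<Rightarrow> (nat \<Rightarrow> nat set set) \<Rightarrow> nat" where
  "utility A V p M = 2 * card (M p) + card {e\<in>A M. e \<inter> V p \<noteq> {}}"

definition Phi :: "nat \<Rightarrow> ((nat \<Rightarrow> nat set set) \<Rightarrow> nat set set) \<Rightarrow> (nat \<Rightarrow> nat set set) \<Rightarrow> nat" where
  "Phi n A M = (\<Sum>p\<in>players n. 2 * card (M p)) + card (A M)"

definition unilateral :: "nat \<Rightarrow> (nat \<Rightarrow> nat set set) \<Rightarrow> (nat \<Rightarrow> nat set set) \<Rightarrow> bool" where
  "unilateral p M M' \<longleftrightarrow> (\<forall>q. q \<noteq> p \<longrightarrow> M' q = M q)"

end

theory Submission
  imports Defs
begin

text \<open>Player 1 owns the path 1--2--3, players 2 and 3 own the single vertices 4 and 5, and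
  the external edges are 3--4, 1--4 and 4--5. If player 1 plays the edge 12, the free external
  edges are 34 and 45; if she plays 23, they are 14 and 45. Either way every maximum matching
  has one edge, so the IA may answer 45 in the first case and 14 in the second. Switching
  from 12 to 23 then raises player 1's utility from 2 to 3, but \<open>\<Phi>\<close> stays at 2 + 1 = 3:
  her gain of one is exactly player 3's loss, which \<open>\<Phi>\<close> counts as well.\<close>

lemma max_card_matching_exists:
  assumes "finite F"
  shows "\<exists>M. max_card_matching F M"
proof -
  define S where "S = {M. M \<subseteq> F \<and> is_matching M}"
  have "finite S" "{} \<in> S"
    using assms unfolding S_def is_matching_def by auto
  then obtain M where "M \<in> S" "card M = Max (card ` S)"
    using Max_in[of "card ` S"] by fastforce
  moreover have "\<forall>M'\<in>S. card M' \<le> Max (card ` S)"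
    using \<open>finite S\<close> by simp
  ultimately show ?thesis
    unfolding max_card_matching_def S_def by auto
qed

lemma ia_algorithm_extending:
  assumes "finite EI"
    and "\<forall>M\<in>D. max_card_matching (available_ext n EI M) (B M)"
  shows "\<exists>A. ia_algorithm n E EI A \<and> (\<forall>M\<in>D. A M = B M)"
proof -
  define A where "A M = (if M \<in> D then B M else SOME X. max_card_matching (available_ext n EI M) X)"
    for M
  have "max_card_matching (available_ext n EI M) (A M)" for M
  proof (cases "M \<in> D")
    case False
    have "finite (available_ext n EI M)"
      using assms(1) unfolding available_ext_def by simp
    then show ?thesis
      using False max_card_matching_exists unfolding A_def by (auto intro: someI_ex)
  qed (use assms(2) A_def in auto)
  then have "ia_algorithm n E EI A"
    unfolding ia_algorithm_def by blast
  moreover have "\<forall>M\<in>D. A M = B M"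
    unfolding A_def by simp
  ultimately show ?thesis
    by blast
qed

lemma card_matching_le_1_if_pairwise_intersecting:
  assumes "M \<subseteq> F" "is_matching M" "\<forall>e\<in>F. \<forall>e'\<in>F. e \<inter> e' \<noteq> {}"
  shows "card M \<le> 1"
proof (cases "finite M")
  case True
  have "e = e'" if "e \<in> M" "e' \<in> M" for e e'
    using assms that unfolding is_matching_def by (metis subsetD)
  then show ?thesis
    using True card_le_Suc0_iff_eq by (metis One_nat_def)
qed simp

lemma max_card_matching_singleton_if_pairwise_intersecting:
  assumes "e \<in> F" "\<forall>e\<in>F. \<forall>e'\<in>F. e \<inter> e' \<noteq> {}"
  shows "max_card_matching F {e}"
  unfolding max_card_matching_def
  using assms card_matching_le_1_if_pairwise_intersecting[of _ F]
  by (simp add: is_matching_def)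

definition inst_V :: "nat \<Rightarrow> nat set" where
  "inst_V p = (if p = 1 then {1, 2, 3} else if p = 2 then {4} else if p = 3 then {5} else {})"

definition inst_E :: "nat \<Rightarrow> nat set set" where
  "inst_E p = (if p = 1 then {{1, 2}, {2, 3}} else {})"

definition inst_EI :: "nat set set" where
  "inst_EI = {{3, 4}, {1, 4}, {4, 5}}"

definition prof12 :: "nat \<Rightarrow> nat set set" where
  "prof12 p = (if p = 1 then {{1, 2}} else {})"

definition prof23 :: "nat \<Rightarrow> nat set set" where
  "prof23 p = (if p = 1 then {{2, 3}} else {})"

lemma players_3: "players 3 = {1, 2, 3}"
  unfolding players_def by auto

lemma keg_inst: "keg 3 inst_V inst_E inst_EI"
  unfolding keg_def players_3 inst_V_def inst_E_def inst_EI_def by auto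

lemma profile_prof12: "profile 3 inst_E prof12"
  and profile_prof23: "profile 3 inst_E prof23"
  unfolding profile_def players_3 inst_E_def prof12_def prof23_def is_matching_def by auto

lemma prof12_neq_prof23: "prof12 \<noteq> prof23"
  unfolding prof12_def prof23_def by (auto dest: fun_cong[of _ _ 1] simp: doubleton_eq_iff)

lemma unilateral_prof12_prof23: "unilateral 1 prof12 prof23"
  unfolding unilateral_def prof12_def prof23_def by auto

lemma available_prof12: "available_ext 3 inst_EI prof12 = {{3, 4}, {4, 5}}"
  and available_prof23: "available_ext 3 inst_EI prof23 = {{1, 4}, {4, 5}}"
  unfolding available_ext_def covered_def players_3 prof12_def prof23_def inst_EI_def by auto

lemma ia_algorithm_against_then_for_player_1:
  "\<exists>A. ia_algorithm 3 inst_E inst_EI A \<and> A prof12 = {{4, 5}} \<and> A prof23 = {{1, 4}}"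
proof -
  have "max_card_matching (available_ext 3 inst_EI prof12) {{4, 5}}"
    unfolding available_prof12
    by (rule max_card_matching_singleton_if_pairwise_intersecting) auto
  moreover have "max_card_matching (available_ext 3 inst_EI prof23) {{1, 4}}"
    unfolding available_prof23
    by (rule max_card_matching_singleton_if_pairwise_intersecting) auto
  moreover have "finite inst_EI"
    by (simp add: inst_EI_def)
  ultimately show ?thesis
    using ia_algorithm_extending[of inst_EI "{prof12, prof23}" 3
        "\<lambda>M. if M = prof12 then {{4, 5}} else {{1, 4}}" inst_E]
    by (simp add: prof12_neq_prof23 prof12_neq_prof23[symmetric])
qed

theorem mainTheorem5:
  shows "\<exists>(V :: nat \<Rightarrow> nat set) (E :: nat \<Rightarrow> nat set set) (EI :: nat set set)
            (A :: (nat \<Rightarrow> nat set set) \<Rightarrow> nat set set) (ss :: (nat \<Rightarrow> nat set set) list).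
     keg 3 V E EI \<and> ia_algorithm 3 E EI A \<and>
     length ss \<ge> 2 \<and>
     (\<forall>M\<in>set ss. profile 3 E M) \<and>
     (\<forall>i < length ss - 1. \<exists>p\<in>players 3.
        unilateral p (ss ! i) (ss ! Suc i) \<and>
        utility A V p (ss ! i) < utility A V p (ss ! Suc i)) \<and>
     (\<exists>i < length ss - 1. Phi 3 A (ss ! Suc i) \<le> Phi 3 A (ss ! i))"
proof -
  obtain A where ia: "ia_algorithm 3 inst_E inst_EI A"
    and A12: "A prof12 = {{4, 5}}" and A23: "A prof23 = {{1, 4}}"
    using ia_algorithm_against_then_for_player_1 by blast
  have "{e \<in> {{1, 4}}. e \<inter> {1, 2, 3} \<noteq> {}} = {{1 :: nat, 4}}"
    by auto
  then have "utility A inst_V 1 prof12 = 2" "utility A inst_V 1 prof23 = 3"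
    unfolding utility_def A12 A23 by (simp_all add: prof12_def prof23_def inst_V_def)
  moreover have "Phi 3 A prof12 = 3" "Phi 3 A prof23 = 3"
    unfolding Phi_def A12 A23 players_3 by (simp_all add: prof12_def prof23_def)
  ultimately show ?thesis
    using keg_inst ia profile_prof12 profile_prof23 unilateral_prof12_prof23
    by (intro exI[of _ inst_V] exI[of _ inst_E] exI[of _ inst_EI] exI[of _ A]
        exI[of _ "[prof12, prof23]"]) (auto simp: players_3)
qed

end
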